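(* Let $p$ be a prime and let $s,g\geq1$ be integers with $s\mid g$. Then $$s\,r\!\left(\tfrac{2g}{s},p\right)+v_p(s!)\leq r(2g,p).$$
   Context: For a prime $p$ and an integer $n\geq1$, $r(n,p)=\sum_{i\geq0}\lfloor n/(p^i(p-1))\rfloor$. *)

theory Defs
  imports "HOL-Computational_Algebra.Computational_Algebra"
begin

text \<open>r(n,p) = sum over i >= 0 of floor(n / (p^i (p-1))). Only finitely many terms are
  nonzero (for p >= 2), so we sum over the (finite) set of indices with nonzero term.\<close>
definition r_fun :: "nat \<Rightarrow> nat \<Rightarrow> nat" where
  "r_fun n p = (\<Sum>i\<in>{i. n div (p ^ i * (p - 1)) \<noteq> 0}. n div (p ^ i * (p - 1)))"

end

theory Submission
  imports Defs
begin

text \<open>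
  Since \<open>n div (p^i * (p - 1)) = (n div (p - 1)) div p^i\<close>, Legendre's formula gives
  \<open>r(n, p) = m + v\<^sub>p(m!)\<close> with \<open>m = n div (p - 1)\<close>. For \<open>2g = s n\<close> and \<open>M = s n div (p - 1) \<ge> s m\<close>
  the claim thus becomes \<open>s m + s v\<^sub>p(m!) + v\<^sub>p(s!) \<le> M + v\<^sub>p(M!)\<close>, which follows from
  \<open>(m!)^s s!\<close> dividing \<open>(s m)!\<close>. If \<open>m = 0\<close>, it suffices that \<open>v\<^sub>p(s!) \<le> r(s, p)\<close>, which is a
  termwise comparison of Legendre's formula with the sum defining \<open>r\<close>.
\<close>

lemma Suc_div_eq_div_plus_dvd:
  fixes m q :: nat
  shows "Suc m div q = m div q + (if q dvd Suc m then 1 else 0)"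
  by (simp add: div_Suc dvd_eq_mod_eq_0)

lemma multiplicity_less_self:
  fixes p n :: nat
  assumes "p > 1" and "n > 0"
  shows "multiplicity p n < n"
proof -
  have "multiplicity p n < p ^ multiplicity p n"
    using assms(1) by (simp add: power_gt_expt)
  also have "\<dots> \<le> n"
    using assms(2) by (intro dvd_imp_le multiplicity_dvd)
  finally show ?thesis .
qed

lemma card_prime_power_divisors_eq_multiplicity:
  fixes p n N :: nat
  assumes "p > 1" and "n > 0" and "multiplicity p n \<le> N"
  shows "(\<Sum>i=1..N. if p ^ i dvd n then 1 else 0 :: nat) = multiplicity p n"
proof -
  have "{i \<in> {1..N}. p ^ i dvd n} = {1..multiplicity p n}"
    using assms by (auto simp: power_dvd_iff_le_multiplicity)
  then show ?thesis
    by (simp flip: sum.inter_filter)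
qed

theorem legendre_multiplicity_fact:
  fixes p m N :: nat
  assumes "prime p" and "m \<le> N"
  shows "multiplicity p (fact m) = (\<Sum>i=1..N. m div p ^ i)"
  using assms(2)
proof (induction m)
  case 0
  then show ?case by simp
next
  case (Suc m)
  have p: "p > 1" "prime_elem p"
    using assms(1) prime_gt_1_nat by auto
  have "multiplicity p (fact (Suc m) :: nat) = multiplicity p (Suc m * fact m)"
    by simp
  also have "\<dots> = multiplicity p (Suc m) + multiplicity p (fact m :: nat)"
    using p(2) by (intro prime_elem_multiplicity_mult_distrib) auto
  also have "multiplicity p (Suc m) = (\<Sum>i=1..N. if p ^ i dvd Suc m then 1 else 0)"
    using p(1) multiplicity_less_self[of p "Suc m"] Suc.prems
    by (intro card_prime_power_divisors_eq_multiplicity[symmetric]) auto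
  also have "multiplicity p (fact m :: nat) = (\<Sum>i=1..N. m div p ^ i)"
    using Suc by simp
  finally show ?case
    by (simp add: Suc_div_eq_div_plus_dvd sum.distrib)
qed

lemma multiplicity_fact_mono:
  fixes p a b :: nat
  assumes "a \<le> b"
  shows "multiplicity p (fact a) \<le> multiplicity p (fact b)"
  using assms by (intro dvd_imp_multiplicity_le fact_dvd) auto

lemma r_fun_eq_sum:
  fixes n p N :: nat
  assumes "p \<ge> 2" and "n \<le> N"
  shows "r_fun n p = (\<Sum>i\<le>N. n div (p ^ i * (p - 1)))"
  unfolding r_fun_def
proof (rule sum.mono_neutral_left)
  show "{i. n div (p ^ i * (p - 1)) \<noteq> 0} \<subseteq> {..N}"
  proof
    fix i assume "i \<in> {i. n div (p ^ i * (p - 1)) \<noteq> 0}"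
    then have "p ^ i * (p - 1) \<le> n"
      by (simp add: div_eq_0_iff)
    moreover have "p ^ i \<le> p ^ i * (p - 1)"
      using assms(1) by simp
    moreover have "i < p ^ i"
      using assms(1) by (simp add: power_gt_expt)
    ultimately have "i \<le> N"
      using assms(2) by linarith
    then show "i \<in> {..N}" by simp
  qed
qed auto

lemma r_fun_mono:
  fixes a b p :: nat
  assumes "p \<ge> 2" and "a \<le> b"
  shows "r_fun a p \<le> r_fun b p"
proof -
  have "r_fun a p = (\<Sum>i\<le>b. a div (p ^ i * (p - 1)))"
    using assms by (rule r_fun_eq_sum)
  also have "\<dots> \<le> (\<Sum>i\<le>b. b div (p ^ i * (p - 1)))"
    using assms(2) by (intro sum_mono div_le_mono)
  also have "\<dots> = r_fun b p"
    using assms(1) by (simp add: r_fun_eq_sum[of p b b])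
  finally show ?thesis .
qed

lemma r_fun_eq_legendre:
  fixes n p :: nat
  assumes "prime p"
  shows "r_fun n p = n div (p - 1) + multiplicity p (fact (n div (p - 1)))"
proof -
  have "p \<ge> 2"
    using assms prime_ge_2_nat by blast
  then have "r_fun n p = (\<Sum>i\<le>n. n div (p ^ i * (p - 1)))"
    by (simp add: r_fun_eq_sum[of p n n])
  also have "\<dots> = (\<Sum>i\<le>n. n div (p - 1) div p ^ i)"
    by (simp add: div_mult2_eq mult.commute[of "p ^ _"])
  also have "\<dots> = n div (p - 1) + (\<Sum>i=1..n. n div (p - 1) div p ^ i)"
    by (simp add: atMost_atLeast0 sum.atLeast_Suc_atMost)
  also have "(\<Sum>i=1..n. n div (p - 1) div p ^ i) = multiplicity p (fact (n div (p - 1)))"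
    using legendre_multiplicity_fact[OF assms, of "n div (p - 1)" n] by simp
  finally show ?thesis .
qed

lemma multiplicity_fact_le_r_fun:
  fixes p s :: nat
  assumes "prime p"
  shows "multiplicity p (fact s) \<le> r_fun s p"
proof -
  have p: "p \<ge> 2"
    using assms prime_ge_2_nat by blast
  have "multiplicity p (fact s) = (\<Sum>i=1..Suc s. s div p ^ i)"
    using assms by (simp add: legendre_multiplicity_fact[of p s "Suc s"])
  also have "\<dots> = (\<Sum>i\<le>s. s div p ^ Suc i)"
    by (simp only: atMost_atLeast0 One_nat_def sum.shift_bounds_cl_Suc_ivl)
  also have "\<dots> \<le> (\<Sum>i\<le>s. s div (p ^ i * (p - 1)))"
    using p by (intro sum_mono div_le_mono2) auto
  also have "\<dots> = r_fun s p"
    using p by (simp add: r_fun_eq_sum[of p s s])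
  finally show ?thesis .
qed

lemma Suc_dvd_binomial_mult:
  fixes m s :: nat
  assumes "m > 0"
  shows "Suc s dvd (Suc s * m) choose m"
proof -
  have "m * ((Suc s * m) choose m) = m * (Suc s * ((Suc s * m - 1) choose (m - 1)))"
    using assms times_binomial_minus1_eq[of m "Suc s * m"] by (simp add: algebra_simps)
  then have "(Suc s * m) choose m = Suc s * ((Suc s * m - 1) choose (m - 1))"
    using assms by simp
  then show ?thesis
    by (metis dvd_triv_left)
qed

lemma fact_power_mult_fact_dvd_fact_mult:
  fixes m s :: nat
  assumes "m > 0"
  shows "fact m ^ s * fact s dvd (fact (s * m) :: nat)"
proof (induction s)
  case 0
  show ?case by simp
next
  case (Suc s)
  have "fact m ^ Suc s * fact (Suc s) = (fact m ^ s * fact s) * (fact m * Suc s)"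
    by (simp add: algebra_simps)
  also have "\<dots> dvd fact (s * m) * (fact m * ((Suc s * m) choose m))"
    using Suc.IH Suc_dvd_binomial_mult[OF assms, of s] by (intro mult_dvd_mono) auto
  also have "\<dots> = fact (Suc s * m)"
    using binomial_fact_lemma[of m "Suc s * m"] by (simp add: algebra_simps)
  finally show ?case .
qed

lemma r_fun_mult_ge:
  fixes p n s :: nat
  assumes "prime p" and "n > 0"
  shows "s * r_fun n p + multiplicity p (fact s) \<le> r_fun (s * n) p"
proof -
  have p: "p \<ge> 2" "prime_elem p"
    using assms(1) prime_ge_2_nat by auto
  define m where "m = n div (p - 1)"
  define M where "M = (s * n) div (p - 1)"
  have "s * m * (p - 1) \<le> s * n"
    unfolding m_def mult.assoc by (intro mult_le_mono2 div_times_less_eq_dividend)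
  then have "s * m \<le> M"
    unfolding M_def using p(1) by (simp add: less_eq_div_iff_mult_less_eq)
  show ?thesis
  proof (cases "m = 0")
    case True
    then have "r_fun n p = 0"
      using r_fun_eq_legendre[OF assms(1), of n] by (simp add: m_def)
    moreover have "r_fun s p \<le> r_fun (s * n) p"
      using p(1) assms(2) by (intro r_fun_mono) auto
    ultimately show ?thesis
      using multiplicity_fact_le_r_fun[OF assms(1), of s] by simp
  next
    case False
    have "s * multiplicity p (fact m) + multiplicity p (fact s) = multiplicity p (fact m ^ s * fact s :: nat)"
      using p(2) by (simp add: prime_elem_multiplicity_mult_distrib prime_elem_multiplicity_power_distrib)
    also have "\<dots> \<le> multiplicity p (fact (s * m) :: nat)"
      using False by (intro dvd_imp_multiplicity_le fact_power_mult_fact_dvd_fact_mult) auto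
    also have "\<dots> \<le> multiplicity p (fact M)"
      using \<open>s * m \<le> M\<close> by (rule multiplicity_fact_mono)
    finally show ?thesis
      using \<open>s * m \<le> M\<close> r_fun_eq_legendre[OF assms(1)]
      by (simp add: m_def M_def algebra_simps)
  qed
qed

theorem mainTheorem19:
  fixes p s g :: nat
  assumes "prime p" and "s \<ge> 1" and "g \<ge> 1" and "s dvd g"
  shows "s * r_fun (2 * g div s) p + multiplicity p (fact s) \<le> r_fun (2 * g) p"
proof -
  obtain k where "g = s * k"
    using assms(4) by blast
  with assms(2,3) have "2 * g div s = 2 * k" and "2 * g = s * (2 * k)" and "2 * k > 0"
    by auto
  then show ?thesis
    using r_fun_mult_ge[OF assms(1)] by metis
qed

end
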